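(* Let $G$ be a finite group. The graph $\mathcal{P}^*(G)/\mathtt{O}$ is a tame quotient of $\mathcal{P}^*(G)$ if and only if, for all $x,y\in G\setminus\{1\}$, $x\mathtt{O}y$ implies $x=y$.
   Context: The power graph $\mathcal{P}(G)$ has vertex set $G$, distinct $x,y$ adjacent iff one is a positive integer power of the other; $\mathcal{P}^*(G)$ is its subgraph induced on $G\setminus\{1\}$. $x\mathtt{O}y$ ($x,y$ open twins) iff $x$ and $y$ have the same open neighbourhood (set of neighbours excluding the vertex itself). For a graph $\Gamma$ and equivalence $\sim$ on its vertices, $\Gamma/\sim$ has vertex set the classes, classes joined iff some representatives are joined; the quotient is tame if $[x]=[y]$ implies $x$ and $y$ are joined by a path in $\Gamma$. *)

theory Defs
  imports "HOL-Algebra.Group"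
begin

definition power_adj :: "('a, 'b) monoid_scheme \<Rightarrow> 'a \<Rightarrow> 'a \<Rightarrow> bool" where
  "power_adj G x y \<longleftrightarrow> x \<in> carrier G \<and> y \<in> carrier G \<and> x \<noteq> y \<and>
     ((\<exists>n::nat. n > 0 \<and> y = x [^]\<^bsub>G\<^esub> n) \<or> (\<exists>n::nat. n > 0 \<and> x = y [^]\<^bsub>G\<^esub> n))"

definition pstar_vertices :: "('a, 'b) monoid_scheme \<Rightarrow> 'a set" where
  "pstar_vertices G = carrier G - {\<one>\<^bsub>G\<^esub>}"

definition induced_adj :: "'a set \<Rightarrow> ('a \<Rightarrow> 'a \<Rightarrow> bool) \<Rightarrow> 'a \<Rightarrow> 'a \<Rightarrow> bool" where
  "induced_adj V E x y \<longleftrightarrow> x \<in> V \<and> y \<in> V \<and> E x y"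

definition open_nbhd :: "'a set \<Rightarrow> ('a \<Rightarrow> 'a \<Rightarrow> bool) \<Rightarrow> 'a \<Rightarrow> 'a set" where
  "open_nbhd V E x = {y \<in> V. E x y}"

definition open_twins :: "'a set \<Rightarrow> ('a \<Rightarrow> 'a \<Rightarrow> bool) \<Rightarrow> 'a \<Rightarrow> 'a \<Rightarrow> bool" where
  "open_twins V E x y \<longleftrightarrow> x \<in> V \<and> y \<in> V \<and> open_nbhd V E x = open_nbhd V E y"

definition tame_quotient :: "'a set \<Rightarrow> ('a \<Rightarrow> 'a \<Rightarrow> bool) \<Rightarrow> ('a \<Rightarrow> 'a \<Rightarrow> bool) \<Rightarrow> bool" where
  "tame_quotient V E R \<longleftrightarrow>
     (\<forall>x\<in>V. \<forall>y\<in>V. R x y \<longrightarrow> (\<lambda>a b. a \<in> V \<and> b \<in> V \<and> E a b)\<^sup>*\<^sup>* x y)"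

end

theory Submission
  imports Defs "HOL-Algebra.Multiplicative_Group"
begin

text \<open>
  Distinct open twins x, y of the reduced power graph are isolated vertices. They are not
  adjacent (else y would be its own neighbour). If x were not an involution, then x and
  x\<inverse> \<noteq> x would be mutual powers, so y, adjacent to x\<inverse>, would be comparable with x;
  hence x and y are involutions. A common neighbour w of two involutions x, y must have both
  among its powers, and the cyclic group generated by w contains at most one involution.
  So x has no neighbour at all and cannot be joined to y by a path, which makes tameness
  equivalent to triviality of the twin relation.
\<close>

lemma tame_quotient_iff_trivial:
  assumes isolated: "\<And>x y w. R x y \<Longrightarrow> x \<noteq> y \<Longrightarrow> \<not> E x w"
  shows "tame_quotient V E R \<longleftrightarrow> (\<forall>x\<in>V. \<forall>y\<in>V. R x y \<longrightarrow> x = y)"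
proof
  assume tame: "tame_quotient V E R"
  show "\<forall>x\<in>V. \<forall>y\<in>V. R x y \<longrightarrow> x = y"
  proof (intro ballI impI)
    fix x y assume "x \<in> V" "y \<in> V" "R x y"
    then have path: "(\<lambda>a b. a \<in> V \<and> b \<in> V \<and> E a b)\<^sup>*\<^sup>* x y"
      using tame unfolding tame_quotient_def by blast
    show "x = y"
    proof (rule ccontr)
      assume "x \<noteq> y"
      with path obtain w where "E x w"
        by (auto elim: converse_rtranclpE)
      with isolated \<open>R x y\<close> \<open>x \<noteq> y\<close> show False by blast
    qed
  qed
qed (auto simp: tame_quotient_def)

lemma open_twins_induced_iff:
  "open_twins V (induced_adj V E) x y \<longleftrightarrow> x \<in> V \<and> y \<in> V \<and> (\<forall>w\<in>V. E x w \<longleftrightarrow> E y w)"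
  unfolding open_twins_def open_nbhd_def induced_adj_def by blast

lemma power_adj_sym: "power_adj G x y \<longleftrightarrow> power_adj G y x"
  unfolding power_adj_def by blast

lemma (in group) inv_eq_pos_pow:
  assumes "finite (carrier G)" "x \<in> carrier G"
  shows "\<exists>n::nat. n > 0 \<and> inv x = x [^] n"
proof -
  have order: "order G > 0"
    using assms(1) order_gt_0_iff_finite by blast
  \<comment> \<open>unlike order G - 1, this exponent stays positive for the trivial group\<close>
  have "x [^] (2 * order G - 1) \<otimes> x = x [^] (2 * order G)"
    using order assms(2) by (metis Suc_diff_1 mult_pos_pos nat_pow_Suc zero_less_numeral)
  also have "\<dots> = \<one>"
    using assms(2) pow_order_eq_1 by (metis mult.commute nat_pow_one nat_pow_pow)
  finally have "inv x = x [^] (2 * order G - 1)"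
    using assms(2) by (intro inv_equality) auto
  moreover have "2 * order G - 1 > 0"
    using order by simp
  ultimately show ?thesis by blast
qed

lemma (in group) pos_pow_trans:
  fixes m n :: nat
  assumes "x \<in> carrier G" "0 < m" "0 < n" "y = x [^] m" "z = y [^] n"
  shows "\<exists>k::nat. k > 0 \<and> z = x [^] k"
  using assms by (auto simp: nat_pow_pow intro!: exI[of _ "m * n"])

lemma (in group) involution_pow:
  assumes "x \<in> carrier G" "x \<otimes> x = \<one>"
  shows "x [^] (n::nat) = (if even n then \<one> else x)"
  by (induction n) (use assms in auto)

lemma (in group) involution_in_cyclic_unique:
  assumes "x \<otimes> x = \<one>" "y \<otimes> y = \<one>" "x \<noteq> \<one>" "y \<noteq> \<one>"
  shows "z \<in> carrier G \<Longrightarrow> z [^] (a::nat) = x \<Longrightarrow> z [^] (b::nat) = y \<Longrightarrow> x = y"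
proof (induction a arbitrary: b z rule: less_induct)
  case (less a)
  have carrier: "x \<in> carrier G" "y \<in> carrier G"
    using less.prems by auto
  have "a > 0"
    using less.prems assms by (cases a) auto
  have "x [^] b = y [^] a"
    using less.prems by (metis mult.commute nat_pow_pow)
  show ?case
  proof (cases "even a \<and> even b")
    case True
    then obtain a' b' where ab: "a = 2 * a'" "b = 2 * b'" by blast
    then have "(z [^] (2::nat)) [^] a' = x" "(z [^] (2::nat)) [^] b' = y" "a' < a"
      using less.prems \<open>a > 0\<close> by (auto simp: nat_pow_pow)
    then show ?thesis
      using less.IH less.prems(1) by blast
  next
    case False
    with \<open>x [^] b = y [^] a\<close> show ?thesis
      using involution_pow[OF carrier(1) assms(1)] involution_pow[OF carrier(2) assms(2)] assms
      by (auto split: if_splits)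
  qed
qed

lemma (in group) power_adj_involution_imp_pow:
  assumes "x \<otimes> x = \<one>" "w \<noteq> \<one>" "power_adj G x w"
  shows "\<exists>a::nat. w [^] a = x"
  using assms involution_pow[of x] unfolding power_adj_def by (metis (full_types))

lemma (in group) power_twin_involution:
  assumes fin: "finite (carrier G)"
    and x: "x \<in> carrier G" "x \<noteq> \<one>" and "x \<noteq> y" "\<not> power_adj G x y"
    and twin: "\<forall>w \<in> carrier G - {\<one>}. power_adj G x w \<longrightarrow> power_adj G y w"
  shows "x \<otimes> x = \<one>"
proof (rule ccontr)
  assume "x \<otimes> x \<noteq> \<one>"
  then have "inv x \<noteq> x"
    using x by (metis r_inv)
  obtain n :: nat where n: "n > 0" "inv x = x [^] n"
    using inv_eq_pos_pow[OF fin x(1)] by blast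
  obtain n' :: nat where n': "n' > 0" "x = inv x [^] n'"
    using inv_eq_pos_pow[OF fin, of "inv x"] x by auto
  have "power_adj G x (inv x)"
    using n x \<open>inv x \<noteq> x\<close> inv_closed unfolding power_adj_def by metis
  then have "power_adj G y (inv x)"
    using twin x by auto
  then have y: "y \<in> carrier G" and comparable:
    "(\<exists>k::nat. k > 0 \<and> inv x = y [^] k) \<or> (\<exists>k::nat. k > 0 \<and> y = inv x [^] k)"
    unfolding power_adj_def by auto
  have "(\<exists>k::nat. k > 0 \<and> x = y [^] k) \<or> (\<exists>k::nat. k > 0 \<and> y = x [^] k)"
    using comparable
  proof
    assume "\<exists>k::nat. k > 0 \<and> inv x = y [^] k"
    then show ?thesis
      using pos_pow_trans[OF y _ n'(1) _ n'(2)] by blast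
  next
    assume "\<exists>k::nat. k > 0 \<and> y = inv x [^] k"
    then show ?thesis
      using pos_pow_trans[OF x(1) n(1) _ n(2)] by blast
  qed
  with x y \<open>x \<noteq> y\<close> \<open>\<not> power_adj G x y\<close> show False
    unfolding power_adj_def by blast
qed

lemma (in group) power_twin_isolated:
  assumes fin: "finite (carrier G)"
    and twin: "open_twins (pstar_vertices G) (induced_adj (pstar_vertices G) (power_adj G)) x y"
    and "x \<noteq> y"
  shows "\<not> induced_adj (pstar_vertices G) (power_adj G) x w"
proof
  assume "induced_adj (pstar_vertices G) (power_adj G) x w"
  then have w: "w \<in> carrier G" "w \<noteq> \<one>" and "power_adj G x w"
    unfolding induced_adj_def pstar_vertices_def by auto
  have x: "x \<in> carrier G" "x \<noteq> \<one>" and y: "y \<in> carrier G" "y \<noteq> \<one>"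
    and nbhd: "\<forall>v \<in> carrier G - {\<one>}. power_adj G x v \<longleftrightarrow> power_adj G y v"
    using twin unfolding open_twins_induced_iff pstar_vertices_def by auto
  have "\<not> power_adj G x y"
    using nbhd y unfolding power_adj_def by blast
  then have "x \<otimes> x = \<one>" "y \<otimes> y = \<one>"
    using power_twin_involution[OF fin] x y nbhd \<open>x \<noteq> y\<close> power_adj_sym by metis+
  moreover obtain a b :: nat where "w [^] a = x" "w [^] b = y"
    using power_adj_involution_imp_pow \<open>power_adj G x w\<close> nbhd w calculation by blast
  ultimately have "x = y"
    using involution_in_cyclic_unique x y w by blast
  with \<open>x \<noteq> y\<close> show False ..
qed

theorem mainTheorem19:
  fixes G (structure)
  assumes "group G" and "finite (carrier G)"
  shows "tame_quotient (pstar_vertices G) (induced_adj (pstar_vertices G) (power_adj G))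
           (open_twins (pstar_vertices G) (induced_adj (pstar_vertices G) (power_adj G)))
     \<longleftrightarrow> (\<forall>x \<in> pstar_vertices G. \<forall>y \<in> pstar_vertices G.
           open_twins (pstar_vertices G) (induced_adj (pstar_vertices G) (power_adj G)) x y \<longrightarrow> x = y)"
  using group.power_twin_isolated[OF assms] by (intro tame_quotient_iff_trivial)

end
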